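(* Let $T$ be an infinite, locally finite tree with maximum degree at least three and finite metric dimension. Then $$\beta(T)=\sum_{v\in V(T),\ \deg(v)\ge 3}\max\{P_T(v)-1,0\}.$$ Moreover, a set $S\subseteq V(T)$ is a metric basis of $T$ if and only if it is obtained as follows: for each vertex $v$ with $P_T(v)=k\ge 2$, choose $k-1$ vertices different from $v$ lying on $k-1$ distinct branch paths of $T$ at $v$ (and $S$ consists exactly of all the chosen vertices).
   Context: $d$ denotes shortest-path distance. A vertex $x$ resolves $u,v$ if $d(u,x)\ne d(v,x)$; a set of vertices is a resolving set if every pair of distinct vertices is resolved by some vertex of it. The metric dimension $\beta(T)$ is the minimum cardinality of a resolving set if a finite one exists, and $\infty$ otherwise; a metric basis is a resolving set of minimum cardinality. For a vertex $v$ of $T$, a branch of $T$ at $v$ is a maximal subtree of $T$ having $v$ as a leaf (so there are exactly $\deg(v)$ branches at $v$). A branch path of $T$ at $v$ is a branch at $v$ that is either a finite path or a one-way infinite path. $P_T(v)$ denotes the number of branch paths of $T$ at $v$. *)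

theory Defs
  imports Main "HOL-Library.Extended_Nat" "HOL-Library.Groups_Big_Fun"
begin

definition graph :: "'a set \<Rightarrow> ('a \<Rightarrow> 'a \<Rightarrow> bool) \<Rightarrow> bool" where
  "graph V E \<longleftrightarrow> (\<forall>x y. E x y \<longrightarrow> x \<in> V \<and> y \<in> V \<and> E y x \<and> x \<noteq> y)"

definition walk :: "('a \<Rightarrow> 'a \<Rightarrow> bool) \<Rightarrow> 'a list \<Rightarrow> bool" where
  "walk E xs \<longleftrightarrow> xs \<noteq> [] \<and> (\<forall>i. Suc i < length xs \<longrightarrow> E (xs ! i) (xs ! Suc i))"

definition reach :: "('a \<Rightarrow> 'a \<Rightarrow> bool) \<Rightarrow> 'a set \<Rightarrow> 'a \<Rightarrow> 'a \<Rightarrow> bool" where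
  "reach E A x y \<longleftrightarrow> x \<in> A \<and> (\<lambda>a b. E a b \<and> a \<in> A \<and> b \<in> A)\<^sup>*\<^sup>* x y"

definition connected_graph :: "'a set \<Rightarrow> ('a \<Rightarrow> 'a \<Rightarrow> bool) \<Rightarrow> bool" where
  "connected_graph V E \<longleftrightarrow> (\<forall>x\<in>V. \<forall>y\<in>V. reach E V x y)"

definition acyclic_graph :: "'a set \<Rightarrow> ('a \<Rightarrow> 'a \<Rightarrow> bool) \<Rightarrow> bool" where
  "acyclic_graph V E \<longleftrightarrow>
     \<not> (\<exists>xs. 3 \<le> length xs \<and> distinct xs \<and> set xs \<subseteq> V \<and> walk E xs \<and> E (last xs) (hd xs))"

definition tree :: "'a set \<Rightarrow> ('a \<Rightarrow> 'a \<Rightarrow> bool) \<Rightarrow> bool" where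
  "tree V E \<longleftrightarrow> graph V E \<and> V \<noteq> {} \<and> connected_graph V E \<and> acyclic_graph V E"

definition locally_finite :: "'a set \<Rightarrow> ('a \<Rightarrow> 'a \<Rightarrow> bool) \<Rightarrow> bool" where
  "locally_finite V E \<longleftrightarrow> (\<forall>v\<in>V. finite {w. E v w})"

definition deg :: "('a \<Rightarrow> 'a \<Rightarrow> bool) \<Rightarrow> 'a \<Rightarrow> nat" where
  "deg E v = card {w. E v w}"

definition dist :: "('a \<Rightarrow> 'a \<Rightarrow> bool) \<Rightarrow> 'a \<Rightarrow> 'a \<Rightarrow> nat" where
  "dist E u v = (LEAST n. \<exists>xs. walk E xs \<and> hd xs = u \<and> last xs = v \<and> length xs = Suc n)"

definition resolving :: "'a set \<Rightarrow> ('a \<Rightarrow> 'a \<Rightarrow> bool) \<Rightarrow> 'a set \<Rightarrow> bool" where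
  "resolving V E S \<longleftrightarrow> S \<subseteq> V \<and>
     (\<forall>u\<in>V. \<forall>v\<in>V. u \<noteq> v \<longrightarrow> (\<exists>x\<in>S. dist E u x \<noteq> dist E v x))"

definition metric_dim :: "'a set \<Rightarrow> ('a \<Rightarrow> 'a \<Rightarrow> bool) \<Rightarrow> enat" where
  "metric_dim V E =
     (if \<exists>S. finite S \<and> resolving V E S
      then enat (LEAST n. \<exists>S. finite S \<and> resolving V E S \<and> card S = n)
      else \<infinity>)"

definition metric_basis :: "'a set \<Rightarrow> ('a \<Rightarrow> 'a \<Rightarrow> bool) \<Rightarrow> 'a set \<Rightarrow> bool" where
  "metric_basis V E S \<longleftrightarrow> finite S \<and> resolving V E S \<and> enat (card S) = metric_dim V E"

text \<open>The branch at v through the neighbour w: v together with the component of T - v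
  containing w (maximal subtree having v as a leaf).\<close>
definition branch :: "'a set \<Rightarrow> ('a \<Rightarrow> 'a \<Rightarrow> bool) \<Rightarrow> 'a \<Rightarrow> 'a \<Rightarrow> 'a set" where
  "branch V E v w = insert v {x. reach E (V - {v}) w x}"

definition branches :: "'a set \<Rightarrow> ('a \<Rightarrow> 'a \<Rightarrow> bool) \<Rightarrow> 'a \<Rightarrow> 'a set set" where
  "branches V E v = {branch V E v w | w. E v w}"

definition is_path_or_ray :: "('a \<Rightarrow> 'a \<Rightarrow> bool) \<Rightarrow> 'a set \<Rightarrow> bool" where
  "is_path_or_ray E B \<longleftrightarrow>
     (\<exists>n f. inj_on f {..<n} \<and> B = f ` {..<n} \<and>
        (\<forall>i<n. \<forall>j<n. E (f i) (f j) \<longleftrightarrow> (i = Suc j \<or> j = Suc i)))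
   \<or> (\<exists>f::nat \<Rightarrow> 'a. inj f \<and> B = range f \<and>
        (\<forall>i j. E (f i) (f j) \<longleftrightarrow> (i = Suc j \<or> j = Suc i)))"

definition branch_paths :: "'a set \<Rightarrow> ('a \<Rightarrow> 'a \<Rightarrow> bool) \<Rightarrow> 'a \<Rightarrow> 'a set set" where
  "branch_paths V E v = {B \<in> branches V E v. is_path_or_ray E B}"

definition P_T :: "'a set \<Rightarrow> ('a \<Rightarrow> 'a \<Rightarrow> bool) \<Rightarrow> 'a \<Rightarrow> nat" where
  "P_T V E v = card (branch_paths V E v)"

end

theory Submission
  imports Defs
begin

text \<open>
  Call a branch path at \<open>v\<close> a leg.  The proof rests on three facts about a tree:
  \<^item> a resolving set meets one of any two branches at a vertex
    (\<open>resolving_meets_branch\<close>), hence all legs at \<open>v\<close> but at most one;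
  \<^item> legs at different vertices of degree at least three are disjoint (\<open>legs_disjoint\<close>);
  \<^item> if \<open>u \<noteq> w\<close> are not resolved by \<open>S\<close>, some vertex has two branches avoiding \<open>S\<close>
    (\<open>unresolved_pair_free_branches\<close>), and a branch that is not a path contains a vertex
    with two legs inside it (\<open>two_legs_in_nonpath_branch\<close>).
  The first two give the lower bound: a finite resolving set has at least
  \<open>\<Sum> (P\<^sub>T(v) - 1)\<close> elements, summed over the vertices with two or more legs, and equality
  forces the shape of the set.  The third shows that every set of the described shape
  resolves.
\<close>

section \<open>Walks and reachability\<close>

lemma walk_Nil [simp]: "\<not> walk E []"
  by (simp add: walk_def)

lemma walk_single [simp]: "walk E [x]"
  by (simp add: walk_def)

lemma walk_Cons2 [simp]: "walk E (x # y # xs) \<longleftrightarrow> E x y \<and> walk E (y # xs)"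
proof
  assume "walk E (x # y # xs)"
  then show "E x y \<and> walk E (y # xs)"
    unfolding walk_def
    by (metis Suc_less_eq length_Cons list.discI nth_Cons_0 nth_Cons_Suc zero_less_Suc)
next
  assume h: "E x y \<and> walk E (y # xs)"
  show "walk E (x # y # xs)" unfolding walk_def
  proof (intro conjI allI impI)
    fix i assume "Suc i < length (x # y # xs)"
    then show "E ((x # y # xs) ! i) ((x # y # xs) ! Suc i)"
      using h unfolding walk_def by (cases i) auto
  qed simp
qed

lemma walk_append:
  assumes "xs \<noteq> []" "ys \<noteq> []"
  shows "walk E (xs @ ys) \<longleftrightarrow> walk E xs \<and> walk E ys \<and> E (last xs) (hd ys)"
  using assms
proof (induction xs rule: list_nonempty_induct)
  case (single x) then show ?case by (cases ys) auto
next
  case (cons x xs) then show ?case by (cases xs) auto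
qed

text \<open>Cutting out the closed sub-walks of a walk leaves a walk without repeated vertices,
  with the same ends, no longer than the original one.\<close>

lemma walk_shorten_distinct:
  "walk E xs \<Longrightarrow> \<exists>ys. walk E ys \<and> hd ys = hd xs \<and> last ys = last xs \<and> set ys \<subseteq> set xs
     \<and> distinct ys \<and> length ys \<le> length xs"
proof (induction "length xs" arbitrary: xs rule: less_induct)
  case less
  show ?case
  proof (cases "distinct xs")
    case True then show ?thesis using less.prems by blast
  next
    case False
    then obtain as z bs cs where xs: "xs = as @ [z] @ bs @ [z] @ cs"
      using not_distinct_decomp by blast
    have tail: "walk E (z # cs)"
      using less.prems walk_append[of "as @ [z] @ bs" "z # cs" E] xs by simp
    have short: "walk E (as @ z # cs)"
    proof (cases "as = []")
      case True then show ?thesis using tail by simp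
    next
      case False
      have "walk E (as @ (z # bs @ [z] @ cs))" using less.prems xs by simp
      then have "walk E as \<and> E (last as) z"
        using walk_append[of as "z # bs @ [z] @ cs" E] False by simp
      then show ?thesis using walk_append[of as "z # cs" E] False tail by simp
    qed
    have "length (as @ z # cs) < length xs" using xs by simp
    from less.hyps[OF this short] obtain ys where ys: "walk E ys" "hd ys = hd (as @ z # cs)"
      "last ys = last (as @ z # cs)" "set ys \<subseteq> set (as @ z # cs)" "distinct ys"
      "length ys \<le> length (as @ z # cs)"
      by blast
    have "hd (as @ z # cs) = hd xs" using xs by (cases as) auto
    moreover have "last (as @ z # cs) = last xs" using xs by (cases cs) auto
    moreover have "set (as @ z # cs) \<subseteq> set xs" using xs by auto
    moreover have "length (as @ z # cs) \<le> length xs" using xs by simp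
    ultimately show ?thesis using ys by (metis order_trans)
  qed
qed

lemma walk_imp_reach:
  assumes "walk E xs" "set xs \<subseteq> A"
  shows "reach E A (hd xs) (last xs)"
proof -
  have "xs \<noteq> []" using assms by auto
  then show ?thesis using assms
  proof (induction xs rule: list_nonempty_induct)
    case (single x) then show ?case by (simp add: reach_def)
  next
    case (cons x xs)
    then obtain y ys where xs: "xs = y # ys" by (cases xs) auto
    then have "reach E A y (last xs)" "E x y" "x \<in> A" "y \<in> A" using cons by auto
    then show ?case using xs unfolding reach_def by (auto intro: converse_rtranclp_into_rtranclp)
  qed
qed

lemma reach_imp_walk:
  "reach E A x y \<Longrightarrow> \<exists>xs. walk E xs \<and> hd xs = x \<and> last xs = y \<and> set xs \<subseteq> A"
  unfolding reach_def
proof (elim conjE)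
  assume x: "x \<in> A" and r: "(\<lambda>a b. E a b \<and> a \<in> A \<and> b \<in> A)\<^sup>*\<^sup>* x y"
  from r show ?thesis
  proof (induction rule: rtranclp_induct)
    case base then show ?case using x by (intro exI[of _ "[x]"]) auto
  next
    case (step y z)
    then obtain xs where xs: "walk E xs" "hd xs = x" "last xs = y" "set xs \<subseteq> A" by blast
    have "xs \<noteq> []" using xs by auto
    then have "walk E (xs @ [z])" using xs step walk_append[of xs "[z]" E] by simp
    then show ?case using xs step \<open>xs \<noteq> []\<close> by (intro exI[of _ "xs @ [z]"]) auto
  qed
qed

lemma reach_in: "reach E A x y \<Longrightarrow> x \<in> A \<and> y \<in> A"
  unfolding reach_def by (metis (no_types, lifting) rtranclp.cases)

lemma reach_trans: "reach E A x y \<Longrightarrow> reach E A y z \<Longrightarrow> reach E A x z"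
  unfolding reach_def by auto

lemma reach_mono: "A \<subseteq> B \<Longrightarrow> reach E A x y \<Longrightarrow> reach E B x y"
  unfolding reach_def by (auto elim!: rtranclp_mono[THEN predicate2D, rotated])

lemma reach_avoiding:
  assumes "reach E A b z" "\<And>w. reach E A b w \<Longrightarrow> w \<notin> C"
  shows "reach E (A - C) b z"
proof -
  from assms(1) have bA: "b \<in> A" and r: "(\<lambda>a b. E a b \<and> a \<in> A \<and> b \<in> A)\<^sup>*\<^sup>* b z"
    unfolding reach_def by auto
  from r have "reach E A b z \<longrightarrow> reach E (A - C) b z"
  proof (induction rule: rtranclp_induct)
    case base then show ?case using assms(2) unfolding reach_def by auto
  next
    case (step y z)
    have ry: "reach E A b y" using step(1) bA unfolding reach_def by auto
    have rz: "reach E A b z"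
      using ry step(2) unfolding reach_def by (auto intro: rtranclp.rtrancl_into_rtrancl)
    then show ?case using step ry assms(2)[OF ry] assms(2)[OF rz] unfolding reach_def
      by (auto intro: rtranclp.rtrancl_into_rtrancl)
  qed
  then show ?thesis using assms(1) by blast
qed

lemma path_or_ray_deg_le_2:
  assumes "is_path_or_ray E B" "x \<in> B" "{w. E x w} \<subseteq> B"
  shows "card {w. E x w} \<le> 2"
proof -
  obtain f :: "nat \<Rightarrow> _" and I where f: "B = f ` I"
    "\<forall>i\<in>I. \<forall>j\<in>I. E (f i) (f j) \<longleftrightarrow> (i = Suc j \<or> j = Suc i)"
    using assms(1) unfolding is_path_or_ray_def by (metis UNIV_I lessThan_iff)
  obtain i where i: "i \<in> I" "x = f i" using assms(2) f(1) by blast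
  have "{w. E x w} \<subseteq> {f (i - 1), f (Suc i)}"
  proof
    fix w assume w: "w \<in> {w. E x w}"
    then obtain j where j: "j \<in> I" "w = f j" using assms(3) f(1) by blast
    then have "i = Suc j \<or> j = Suc i" using f(2) i w by auto
    then show "w \<in> {f (i - 1), f (Suc i)}" using j by auto
  qed
  then have "card {w. E x w} \<le> card {f (i - 1), f (Suc i)}" by (rule card_mono[rotated]) simp
  also have "\<dots> \<le> 2" by (simp add: card_insert_le_m1)
  finally show ?thesis .
qed

lemma down_closed_nat_cases:
  fixes D :: "nat set"
  assumes down: "\<And>k m. k \<in> D \<Longrightarrow> m \<le> k \<Longrightarrow> m \<in> D"
  shows "D = UNIV \<or> (\<exists>n. D = {..<n})"
proof (cases "finite D")
  case fin: True
  show ?thesis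
  proof (cases "D = {}")
    case True then show ?thesis by blast
  next
    case False
    have "D = {..<Suc (Max D)}"
    proof
      show "D \<subseteq> {..<Suc (Max D)}" using Max_ge[OF fin] by (auto simp: less_Suc_eq_le)
      show "{..<Suc (Max D)} \<subseteq> D" using down Max_in[OF fin False] by (auto simp: less_Suc_eq_le)
    qed
    then show ?thesis by blast
  qed
next
  case False
  have "k \<in> D" for k
  proof -
    obtain m where "m \<in> D" "k \<le> m" using False infinite_nat_iff_unbounded_le by blast
    then show ?thesis using down by blast
  qed
  then show ?thesis by blast
qed

lemma is_path_or_rayI:
  assumes down: "\<And>k m. k \<in> D \<Longrightarrow> m \<le> k \<Longrightarrow> m \<in> D"
    and inj: "inj_on f D" and B: "B = f ` D"
    and adj: "\<And>i j. i \<in> D \<Longrightarrow> j \<in> D \<Longrightarrow> E (f i) (f j) \<longleftrightarrow> (i = Suc j \<or> j = Suc i)"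
  shows "is_path_or_ray E B"
proof -
  consider "D = UNIV" | n where "D = {..<n}" using down_closed_nat_cases[of D] down by blast
  then show ?thesis
  proof cases
    case 1
    then show ?thesis using inj B adj unfolding is_path_or_ray_def by blast
  next
    case 2
    then show ?thesis using inj B adj unfolding is_path_or_ray_def by blast
  qed
qed

section \<open>Distances in a tree\<close>

locale tree_graph =
  fixes V :: "'a set" and E :: "'a \<Rightarrow> 'a \<Rightarrow> bool"
  assumes tree: "tree V E"
begin

abbreviation d where "d \<equiv> dist E"

lemma edgeD: "E x y \<Longrightarrow> x \<in> V \<and> y \<in> V \<and> E y x \<and> x \<noteq> y"
  using tree unfolding tree_def graph_def by blast

lemma reach_V: "x \<in> V \<Longrightarrow> y \<in> V \<Longrightarrow> reach E V x y"
  using tree unfolding tree_def connected_graph_def by blast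

lemma no_cycle:
  "\<not> (3 \<le> length xs \<and> distinct xs \<and> set xs \<subseteq> V \<and> walk E xs \<and> E (last xs) (hd xs))"
  using tree unfolding tree_def acyclic_graph_def by blast

lemma walk_in_V: "walk E xs \<Longrightarrow> hd xs \<in> V \<Longrightarrow> set xs \<subseteq> V"
proof (induction xs rule: induct_list012)
  case (3 x y zs) then show ?case using edgeD by auto
qed auto

lemma walk_rev: "walk E xs \<Longrightarrow> walk E (rev xs)"
proof (induction xs rule: induct_list012)
  case (3 x y zs)
  then have "walk E (rev zs @ [y])" by simp
  then show ?case using walk_append[of "rev zs @ [y]" "[x]" E] 3 edgeD by simp
qed auto

lemma reach_sym: "reach E A x y \<Longrightarrow> reach E A y x"
proof -
  assume "reach E A x y"
  from reach_imp_walk[OF this] obtain xs where xs: "walk E xs" "hd xs = x" "last xs = y" "set xs \<subseteq> A"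
    by blast
  have "xs \<noteq> []" using xs(1) by auto
  have "reach E A (hd (rev xs)) (last (rev xs))"
    by (rule walk_imp_reach) (use walk_rev[OF xs(1)] xs(4) in auto)
  then show ?thesis using \<open>xs \<noteq> []\<close> xs(2,3) by (simp add: hd_rev last_rev)
qed

lemma dist_le_walk: "walk E xs \<Longrightarrow> hd xs = u \<Longrightarrow> last xs = v \<Longrightarrow> d u v \<le> length xs - 1"
proof -
  assume a: "walk E xs" "hd xs = u" "last xs = v"
  then have "length xs = Suc (length xs - 1)" by (cases xs) auto
  then show ?thesis unfolding dist_def using a by (intro Least_le) blast
qed

lemma shortest_walk:
  assumes "u \<in> V" "v \<in> V"
  shows "\<exists>xs. walk E xs \<and> hd xs = u \<and> last xs = v \<and> length xs = Suc (d u v)"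
proof -
  obtain xs where "walk E xs" "hd xs = u" "last xs = v"
    using reach_imp_walk[OF reach_V[OF assms]] by blast
  moreover then have "xs \<noteq> []" by auto
  ultimately have "\<exists>n xs. walk E xs \<and> hd xs = u \<and> last xs = v \<and> length xs = Suc n"
    by (intro exI[of _ "length xs - 1"] exI[of _ xs]) simp
  then show ?thesis unfolding dist_def by (rule LeastI_ex)
qed

lemma dist_self [simp]: "d u u = 0"
  using dist_le_walk[of "[u]" u u] by simp

lemma dist_eq_0: assumes "u \<in> V" "v \<in> V" "d u v = 0" shows "u = v"
proof -
  obtain xs where "walk E xs \<and> hd xs = u \<and> last xs = v \<and> length xs = Suc 0"
    using shortest_walk[OF assms(1,2)] assms(3) by auto
  then show ?thesis by (cases xs) auto
qed

lemma dist_sym: assumes "u \<in> V" "v \<in> V" shows "d u v = d v u"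
proof -
  have "d u v \<le> d v u" if uv: "u \<in> V" "v \<in> V" for u v
  proof -
    obtain xs where "walk E xs \<and> hd xs = v \<and> last xs = u \<and> length xs = Suc (d v u)"
      using shortest_walk uv by blast
    then show ?thesis using dist_le_walk[of "rev xs" u v] walk_rev
      by (metis diff_Suc_1 hd_rev last_rev length_rev)
  qed
  then show ?thesis using assms by (simp add: order_antisym)
qed

lemma dist_edge: assumes "E u v" shows "d u v = 1"
proof -
  have "d u v \<le> 1" using dist_le_walk[of "[u, v]" u v] assms by simp
  moreover have "d u v \<noteq> 0" using dist_eq_0 edgeD assms by blast
  ultimately show ?thesis by simp
qed

lemma dist_eq_1: assumes "u \<in> V" "v \<in> V" "d u v = 1" shows "E u v"
proof -
  obtain xs where "walk E xs \<and> hd xs = u \<and> last xs = v \<and> length xs = Suc 1"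
    using shortest_walk[OF assms(1,2)] assms(3) by auto
  then show ?thesis by (auto simp: length_Suc_conv)
qed

lemma dist_triangle:
  assumes "u \<in> V" "v \<in> V" "w \<in> V"
  shows "d u w \<le> d u v + d v w"
proof -
  obtain xs where xs: "walk E xs" "hd xs = u" "last xs = v" "length xs = Suc (d u v)"
    using shortest_walk[OF assms(1,2)] by blast
  obtain ys where ys: "walk E ys" "hd ys = v" "last ys = w" "length ys = Suc (d v w)"
    using shortest_walk[OF assms(2,3)] by blast
  have joined: "walk E (xs @ tl ys) \<and> hd (xs @ tl ys) = u \<and> last (xs @ tl ys) = w"
  proof (cases "tl ys")
    case Nil
    then have "ys = [v]" using ys by (cases ys) auto
    then show ?thesis using xs ys Nil by auto
  next
    case (Cons y zs)
    have ys': "ys = v # y # zs" using ys Cons by (cases ys) auto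
    have "xs \<noteq> []" using xs by auto
    then show ?thesis using walk_append[of xs "y # zs" E] xs ys ys' Cons by auto
  qed
  have "length (xs @ tl ys) = Suc (d u v + d v w)" using xs ys by simp
  then show ?thesis using dist_le_walk[of "xs @ tl ys" u w] joined by simp
qed

lemma shortest_walk_distinct:
  assumes "walk E xs" "hd xs = u" "last xs = v" "length xs = Suc (d u v)"
  shows "distinct xs"
proof -
  obtain ys where ys: "walk E ys" "hd ys = u" "last ys = v" "set ys \<subseteq> set xs" "distinct ys"
    "length ys \<le> length xs"
    using walk_shorten_distinct[OF assms(1)] assms by auto
  have "d u v \<le> length ys - 1" using dist_le_walk ys(1,2,3) by blast
  moreover have "ys \<noteq> []" using ys(1) by auto
  ultimately have "length ys = length xs" using ys(6) assms(4) by (cases ys) auto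
  have "card (set ys) \<le> card (set xs)" using ys(4) by (simp add: card_mono)
  moreover have "card (set ys) = length ys" using ys(5) by (simp add: distinct_card)
  moreover have "card (set xs) \<le> length xs" by (rule card_length)
  ultimately have "card (set xs) = length xs" using \<open>length ys = length xs\<close> by simp
  then show ?thesis by (simp add: card_distinct)
qed

end

section \<open>Branches\<close>

text \<open>Distances to vertices outside a branch are
  measured through its root; this is the geometric fact behind everything that follows.\<close>

context tree_graph
begin

abbreviation br where "br \<equiv> branch V E"

lemma branch_cases: "x \<in> br v a \<Longrightarrow> x = v \<or> (x \<noteq> v \<and> reach E (V - {v}) a x)"
  unfolding branch_def by auto

lemma branch_subset_V: assumes "E v a" shows "br v a \<subseteq> V"
  using edgeD[OF assms] reach_in[of E "V - {v}" a] unfolding branch_def by auto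

lemma root_in_branch: "v \<in> br v a"
  unfolding branch_def by auto

lemma nbr_in_branch: assumes "E v a" shows "a \<in> br v a"
proof -
  have "a \<in> V - {v}" using edgeD[OF assms] by auto
  then have "reach E (V - {v}) a a" unfolding reach_def by auto
  then show ?thesis unfolding branch_def by auto
qed

lemma branch_closed:
  assumes "E v a" "x \<in> br v a" "x \<noteq> v" "E x z" "z \<noteq> v"
  shows "z \<in> br v a"
proof -
  have r: "reach E (V - {v}) a x" using assms branch_cases by blast
  have "x \<in> V - {v}" "z \<in> V - {v}" using edgeD[OF assms(4)] assms by auto
  then have "reach E (V - {v}) x z" using assms(4) unfolding reach_def by auto
  with r have "reach E (V - {v}) a z" by (rule reach_trans)
  then show ?thesis unfolding branch_def by auto
qed

text \<open>Distinct branches at \<open>v\<close> meet only in \<open>v\<close>; otherwise two neighbours of \<open>v\<close> would be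
  joined in \<open>T - v\<close> and close a cycle through \<open>v\<close>.\<close>

lemma branch_unique:
  assumes "E v a" "E v b" "x \<in> br v a" "x \<in> br v b" "x \<noteq> v"
  shows "a = b"
proof (rule ccontr)
  assume ab: "a \<noteq> b"
  have ra: "reach E (V - {v}) a x" using branch_cases[OF assms(3)] assms(5) by blast
  have rb: "reach E (V - {v}) b x" using branch_cases[OF assms(4)] assms(5) by blast
  have "reach E (V - {v}) a b" using reach_trans[OF ra reach_sym[OF rb]] .
  from reach_imp_walk[OF this] obtain xs where xs: "walk E xs" "hd xs = a" "last xs = b"
    "set xs \<subseteq> V - {v}"
    by blast
  obtain ys where ys0: "walk E ys" "hd ys = hd xs" "last ys = last xs" "set ys \<subseteq> set xs"
    "distinct ys"
    using walk_shorten_distinct[OF xs(1)] by blast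
  then have ys: "walk E ys" "hd ys = a" "last ys = b" "set ys \<subseteq> V - {v}" "distinct ys"
    using xs by auto
  obtain rest where ysr: "ys = a # rest" using ys(1,2) by (cases ys) auto
  have "rest \<noteq> []" using ysr ys(3) ab by auto
  then have "3 \<le> length (v # ys)" using ysr by (cases rest) auto
  moreover have "walk E (v # ys)" using ysr ys(1) assms(1) by simp
  moreover have "distinct (v # ys)" using ys(4,5) by auto
  moreover have "set (v # ys) \<subseteq> V" using ys(4) edgeD[OF assms(1)] by auto
  moreover have "E (last (v # ys)) (hd (v # ys))" using ys(3) ysr edgeD[OF assms(2)] by simp
  ultimately show False using no_cycle[of "v # ys"] by blast
qed

lemma branch_inj: assumes "E v a" "E v b" "br v a = br v b" shows "a = b"
proof -
  have "a \<in> br v b" using nbr_in_branch[OF assms(1)] assms(3) by simp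
  then show ?thesis using branch_unique[OF assms(1,2) nbr_in_branch[OF assms(1)]] edgeD[OF assms(1)] by auto
qed

lemma branch_toward:
  assumes "v \<in> V" "x \<in> V" "x \<noteq> v"
  shows "\<exists>p. E v p \<and> x \<in> br v p \<and> d v x = Suc (d p x)"
proof -
  obtain xs where xs: "walk E xs" "hd xs = v" "last xs = x" "length xs = Suc (d v x)"
    using shortest_walk[OF assms(1,2)] by blast
  have dis: "distinct xs" using shortest_walk_distinct[OF xs] .
  obtain p rest where xsr: "xs = v # p # rest"
  proof (cases xs)
    case (Cons y ys)
    then show ?thesis using xs assms(3) that by (cases ys) auto
  qed (use xs in simp)
  have E1: "E v p" and w: "walk E (p # rest)" using xs(1) xsr by auto
  have "set (p # rest) \<subseteq> V" using walk_in_V[OF w] edgeD[OF E1] by simp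
  moreover have "v \<notin> set (p # rest)" using dis xsr by simp
  ultimately have "reach E (V - {v}) p x"
    using walk_imp_reach[OF w, of "V - {v}"] xs(3) xsr by auto
  then have xb: "x \<in> br v p" unfolding branch_def by auto
  have "d p x \<le> length (p # rest) - 1" using dist_le_walk[OF w refl] xs(3) xsr by simp
  moreover have "d v x \<le> d v p + d p x" using dist_triangle assms edgeD[OF E1] by blast
  moreover have "d v p = 1" using dist_edge[OF E1] .
  ultimately have "d v x = Suc (d p x)" using xs(4) xsr by simp
  then show ?thesis using E1 xb by blast
qed

lemma branch_dist:
  assumes "E v p" "x \<in> br v p" "x \<noteq> v"
  shows "d v x = Suc (d p x)"
proof -
  have "x \<in> V" using branch_subset_V assms by blast
  then obtain q where q: "E v q" "x \<in> br v q" "d v x = Suc (d q x)"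
    using branch_toward assms(3) edgeD[OF assms(1)] by blast
  then have "q = p" using branch_unique[OF q(1) assms(1) q(2) assms(2) assms(3)] by blast
  then show ?thesis using q by simp
qed

text \<open>Every walk leaving a branch passes through its root, so distances from inside a
  branch to the outside split at the root.\<close>

lemma branch_cut:
  assumes "E v a" "x \<in> br v a" "x \<noteq> v" "y \<in> V" "y \<notin> br v a - {v}"
  shows "d x y = d x v + d v y"
proof -
  have xV: "x \<in> V" using branch_subset_V[OF assms(1)] assms(2) by blast
  have vV: "v \<in> V" using edgeD[OF assms(1)] by blast
  obtain ws where ws: "walk E ws" "hd ws = x" "last ws = y" "length ws = Suc (d x y)"
    using shortest_walk[OF xV assms(4)] by blast
  have "v \<in> set ws"
  proof (rule ccontr)
    assume "v \<notin> set ws"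
    then have "set ws \<subseteq> V - {v}" using walk_in_V[OF ws(1)] ws(2) xV by auto
    then have "reach E (V - {v}) x y" using walk_imp_reach[OF ws(1)] ws(2,3) by simp
    moreover have "reach E (V - {v}) a x" using branch_cases[OF assms(2)] assms(3) by blast
    ultimately have ry: "reach E (V - {v}) a y" using reach_trans by metis
    then have "y \<in> br v a" unfolding branch_def by auto
    moreover have "y \<noteq> v" using reach_in[OF ry] by auto
    ultimately show False using assms(5) by blast
  qed
  then obtain as bs where wsp: "ws = as @ v # bs" by (meson split_list)
  have w1: "walk E (as @ [v])"
  proof (cases bs)
    case Nil then show ?thesis using ws(1) wsp by simp
  next
    case (Cons b bs')
    then show ?thesis using ws(1) wsp walk_append[of "as @ [v]" "b # bs'" E] by simp
  qed
  have w2: "walk E (v # bs)" using ws(1) wsp walk_append[of "as" "v # bs" E] by (cases as) auto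
  have "d x v \<le> length as" using dist_le_walk[OF w1] ws(2) wsp by (cases as) auto
  moreover have "d v y \<le> length bs" using dist_le_walk[OF w2] ws(3) wsp by (cases bs) auto
  moreover have "d x y \<le> d x v + d v y" using dist_triangle[OF xV vV assms(4)] .
  ultimately show ?thesis using ws(4) wsp by simp
qed

lemma branch_nested:
  assumes "E r a" "y \<in> br r a" "y \<noteq> r" "E y b" "r \<notin> br y b"
  shows "br y b \<subseteq> br r a - {r}"
proof
  fix z assume z: "z \<in> br y b"
  show "z \<in> br r a - {r}"
  proof (cases "z = y")
    case True then show ?thesis using assms by auto
  next
    case False
    then have rz: "reach E (V - {y}) b z" using z branch_cases by blast
    have "reach E (V - {y} - {r}) b z"
      by (rule reach_avoiding[OF rz]) (use assms(5) in \<open>auto simp: branch_def\<close>)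
    then have "reach E (V - {r}) b z" by (rule reach_mono[rotated]) auto
    moreover have "b \<in> br r a"
      using branch_closed[OF assms(1,2,3,4)] assms(5) nbr_in_branch[OF assms(4)] by blast
    moreover have "b \<noteq> r" using assms(5) nbr_in_branch[OF assms(4)] by blast
    moreover have "reach E (V - {r}) a b" using branch_cases[OF \<open>b \<in> br r a\<close>] \<open>b \<noteq> r\<close> by blast
    ultimately have "reach E (V - {r}) a z" using reach_trans by metis
    moreover have "z \<noteq> r" using z assms(5) by blast
    ultimately show ?thesis unfolding branch_def by auto
  qed
qed

lemma equidistant_in_branch:
  assumes "E u p" "w \<in> br u p" "w \<noteq> u" "s \<in> V" "d u s = d w s"
  shows "s \<in> br u p \<and> s \<noteq> u"
proof -
  have uV: "u \<in> V" and wV: "w \<in> V"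
    using edgeD[OF assms(1)] branch_subset_V[OF assms(1)] assms(2) by auto
  have "s \<noteq> u"
  proof
    assume "s = u"
    then show False using dist_eq_0[OF wV uV] assms(3,5) by simp
  qed
  moreover obtain b where b: "E u b" "s \<in> br u b"
    using branch_toward[OF uV assms(4)] \<open>s \<noteq> u\<close> by blast
  have "b = p"
  proof (rule ccontr)
    assume "b \<noteq> p"
    then have "w \<notin> br u b - {u}" using branch_unique[OF b(1) assms(1) _ assms(2)] by blast
    then have "d s w = d s u + d u w" using branch_cut[OF b(1,2) \<open>s \<noteq> u\<close> wV] by blast
    moreover have "d u w \<noteq> 0" using dist_eq_0[OF uV wV] assms(3) by blast
    moreover have "d s w = d w s" "d s u = d u s" using dist_sym assms(4) uV wV by blast+
    ultimately show False using assms(5) by linarith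
  qed
  ultimately show ?thesis using b by simp
qed

text \<open>The two neighbours \<open>b\<^sub>1, b\<^sub>2\<close> of \<open>y\<close> are resolved only by vertices of the branches
  \<open>br y b\<^sub>1\<close> and \<open>br y b\<^sub>2\<close>: a resolving set meets one of any two branches at a vertex.\<close>

lemma resolving_meets_branch:
  assumes "resolving V E R" "E y b\<^sub>1" "E y b\<^sub>2" "b\<^sub>1 \<noteq> b\<^sub>2"
  shows "\<exists>x\<in>R. x \<in> br y b\<^sub>1 - {y} \<or> x \<in> br y b\<^sub>2 - {y}"
proof (rule ccontr)
  assume outside: "\<not> ?thesis"
  have "b\<^sub>1 \<in> V" "b\<^sub>2 \<in> V" using edgeD assms by blast+
  then obtain x where x: "x \<in> R" "d b\<^sub>1 x \<noteq> d b\<^sub>2 x"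
    using assms(1,4) unfolding resolving_def by blast
  have xV: "x \<in> V" using x(1) assms(1) unfolding resolving_def by blast
  have "d b\<^sub>1 x = d b\<^sub>1 y + d y x"
    by (rule branch_cut[OF assms(2) nbr_in_branch[OF assms(2)]])
      (use edgeD[OF assms(2)] xV x outside in auto)
  moreover have "d b\<^sub>2 x = d b\<^sub>2 y + d y x"
    by (rule branch_cut[OF assms(3) nbr_in_branch[OF assms(3)]])
      (use edgeD[OF assms(3)] xV x outside in auto)
  moreover have "d b\<^sub>1 y = 1" "d b\<^sub>2 y = 1" using dist_edge edgeD assms(2,3) by blast+
  ultimately show False using x(2) by simp
qed

end

section \<open>Branches that are paths\<close>

text \<open>Inside a branch \<open>br r a\<close> we count levels by the distance from the root \<open>r\<close>.  Every vertex
  \<open>x \<noteq> r\<close> has a parent one level lower; the branch is a path or a ray as soon as no vertex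
  has two children, because then each level contains exactly one vertex.\<close>

context tree_graph
begin

abbreviation path where "path \<equiv> is_path_or_ray E"

lemma parent_exists:
  assumes "r \<in> V" "x \<in> V" "x \<noteq> r"
  shows "\<exists>p. E x p \<and> d r x = Suc (d r p)"
proof -
  obtain p where p: "E x p" "d x r = Suc (d p r)"
    using branch_toward[OF assms(2,1)] assms(3) by blast
  then show ?thesis using dist_sym assms edgeD[OF p(1)] by metis
qed

lemma parent_in_branch:
  assumes "E r a" "x \<in> br r a" "x \<noteq> r"
  shows "\<exists>p\<in>br r a. E x p \<and> d r x = Suc (d r p)"
proof -
  obtain p where p: "E x p" "d r x = Suc (d r p)"
    using parent_exists edgeD[OF assms(1)] branch_subset_V[OF assms(1)] assms(2,3) by blast
  have "p \<in> br r a" using branch_closed[OF assms p(1)] root_in_branch by blast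
  then show ?thesis using p by blast
qed

lemma branch_levels_down_closed:
  assumes "E r a" "x \<in> br r a" "m \<le> d r x"
  shows "\<exists>y\<in>br r a. d r y = m"
  using assms(2,3)
proof (induction "d r x" arbitrary: x)
  case 0 then show ?case by auto
next
  case (Suc n)
  show ?case
  proof (cases "m = d r x")
    case True then show ?thesis using Suc.prems by blast
  next
    case False
    have "x \<noteq> r" using Suc.hyps(2) by auto
    then obtain p where "p \<in> br r a" "d r x = Suc (d r p)"
      using parent_in_branch[OF assms(1) Suc.prems(1)] by blast
    then show ?thesis using Suc False by simp
  qed
qed

definition no_fork :: "'a \<Rightarrow> 'a \<Rightarrow> bool" where
  "no_fork r a \<longleftrightarrow> (\<forall>y\<in>br r a - {r}. \<forall>b\<^sub>1 b\<^sub>2. E y b\<^sub>1 \<longrightarrow> E y b\<^sub>2 \<longrightarrow>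
     d r b\<^sub>1 = Suc (d r y) \<longrightarrow> d r b\<^sub>2 = Suc (d r y) \<longrightarrow> b\<^sub>1 = b\<^sub>2)"

lemma branch_level_unique:
  assumes ra: "E r a"
    and no_fork: "no_fork r a"
  shows "x \<in> br r a \<Longrightarrow> y \<in> br r a \<Longrightarrow> d r x = d r y \<Longrightarrow> x = y"
proof (induction "d r x" arbitrary: x y)
  case 0
  have "x \<in> V" "y \<in> V" "r \<in> V" using branch_subset_V[OF ra] edgeD[OF ra] 0 by auto
  then show ?case using dist_eq_0 0 by metis
next
  case (Suc m)
  have "x \<noteq> r" "y \<noteq> r" using Suc.hyps(2) Suc.prems(3) by auto
  then obtain px py where px: "px \<in> br r a" "E x px" "d r x = Suc (d r px)"
    and py: "py \<in> br r a" "E y py" "d r y = Suc (d r py)"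
    using parent_in_branch[OF ra] Suc.prems(1,2) by metis
  have "px = py" using Suc.hyps(1)[OF _ px(1) py(1)] px(3) py(3) Suc.hyps(2) Suc.prems(3) by simp
  show ?case
  proof (cases "px = r")
    case True
    then have "E r x" "E r y" using px(2) py(2) \<open>px = py\<close> edgeD by auto
    then show ?thesis using branch_unique[OF _ ra nbr_in_branch] Suc.prems(1,2) \<open>x \<noteq> r\<close> \<open>y \<noteq> r\<close>
      by metis
  next
    case False
    then show ?thesis
      using no_fork px py \<open>px = py\<close> edgeD Suc.prems(3) unfolding no_fork_def by (metis DiffI singletonD)
  qed
qed

lemma branch_path_if_no_fork:
  assumes ra: "E r a"
    and no_fork: "no_fork r a"
  shows "path (br r a)"
proof -
  define D where "D = {k. \<exists>x\<in>br r a. d r x = k}"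
  define F where "F k = (THE x. x \<in> br r a \<and> d r x = k)" for k
  have unique: "x \<in> br r a \<Longrightarrow> y \<in> br r a \<Longrightarrow> d r x = d r y \<Longrightarrow> x = y" for x y
    using branch_level_unique[OF ra no_fork] by blast
  have F: "F k \<in> br r a \<and> d r (F k) = k" if "k \<in> D" for k
    unfolding F_def by (rule theI') (use that unique in \<open>auto simp: D_def\<close>)
  have F_level: "F (d r x) = x" if "x \<in> br r a" for x
    unfolding F_def by (rule the_equality) (use that unique in auto)
  have adj: "E (F i) (F j) \<longleftrightarrow> (i = Suc j \<or> j = Suc i)" if ij: "i \<in> D" "j \<in> D" for i j
  proof
    assume e: "E (F i) (F j)"
    have "r \<in> V" "F i \<in> V" "F j \<in> V" using edgeD[OF ra] edgeD[OF e] by auto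
    then have "i \<le> j + 1" "j \<le> i + 1"
      using dist_triangle dist_edge e edgeD[OF e] F ij by metis+
    moreover have "i \<noteq> j" using F ij edgeD[OF e] by metis
    ultimately show "i = Suc j \<or> j = Suc i" by linarith
  next
    have step: "E (F (Suc k)) (F k)" if k: "Suc k \<in> D" for k
    proof -
      have "F (Suc k) \<noteq> r" using F[OF k] by auto
      then obtain p where "p \<in> br r a" "E (F (Suc k)) p" "Suc k = Suc (d r p)"
        using parent_in_branch[OF ra] F[OF k] by metis
      then show ?thesis using F_level by auto
    qed
    assume "i = Suc j \<or> j = Suc i"
    then show "E (F i) (F j)" using step ij edgeD by blast
  qed
  have "path (F ` D)"
  proof (rule is_path_or_rayI)
    show "m \<in> D" if "k \<in> D" "m \<le> k" for k m
      using branch_levels_down_closed[OF ra] that unfolding D_def by blast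
    show "inj_on F D" by (rule inj_onI) (metis F)
  qed (use adj in auto)
  moreover have "F ` D = br r a" using F F_level unfolding D_def by force
  ultimately show ?thesis by simp
qed

lemma fork_in_nonpath_branch:
  assumes ra: "E r a" and np: "\<not> path (br r a)"
  shows "\<exists>y b\<^sub>1 b\<^sub>2. y \<in> br r a \<and> y \<noteq> r \<and> E y b\<^sub>1 \<and> E y b\<^sub>2 \<and> b\<^sub>1 \<noteq> b\<^sub>2 \<and>
     br y b\<^sub>1 \<subseteq> br r a - {r} \<and> br y b\<^sub>2 \<subseteq> br r a - {r}"
proof -
  obtain y b\<^sub>1 b\<^sub>2 where y: "y \<in> br r a" "y \<noteq> r" "E y b\<^sub>1" "E y b\<^sub>2" "b\<^sub>1 \<noteq> b\<^sub>2"
    and child: "d r b\<^sub>1 = Suc (d r y)" "d r b\<^sub>2 = Suc (d r y)"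
    using branch_path_if_no_fork[OF ra] np unfolding no_fork_def by blast
  have away: "r \<notin> br y b" if "E y b" "d r b = Suc (d r y)" for b
  proof
    assume rb: "r \<in> br y b"
    have "r \<in> V" "b \<in> V" using edgeD ra that(1) by auto
    then have "d r y = Suc (d r b)"
      using branch_dist[OF that(1) rb] y(2) dist_sym edgeD[OF that(1)] by metis
    then show False using that(2) by simp
  qed
  show ?thesis
    using branch_nested[OF ra y(1,2)] away y child by blast
qed

lemma dist_into_branch_less:
  assumes "E y b" "x \<in> br y b" "x \<noteq> y" "r \<in> V" "r \<notin> br y b"
  shows "d y x < d r x"
proof -
  have "x \<in> V" "y \<in> V" "r \<noteq> y"
    using branch_subset_V[OF assms(1)] edgeD[OF assms(1)] assms(2,5) root_in_branch by auto
  moreover have "d x r = d x y + d y r" using branch_cut[OF assms(1-4)] assms(5) by blast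
  moreover have "d y r \<noteq> 0" using dist_eq_0 \<open>y \<in> V\<close> assms(4) \<open>r \<noteq> y\<close> by blast
  moreover have "d x r = d r x" "d x y = d y x" using dist_sym \<open>x \<in> V\<close> \<open>y \<in> V\<close> assms(4) by auto
  ultimately show ?thesis by linarith
qed

text \<open>Descending through forks inside a non-path branch must stop, because a resolving set
  meets one of the two branches at every fork and its vertices in \<open>br r a\<close> lie at bounded
  distance from \<open>r\<close>.
  The induction is on a bound \<open>n\<close> for these distances.\<close>

lemma two_legs_in_nonpath_branch_bounded:
  assumes R: "resolving V E R"
  shows "E r a \<Longrightarrow> \<not> path (br r a) \<Longrightarrow> (\<forall>x\<in>R. x \<in> br r a - {r} \<longrightarrow> d r x < n) \<Longrightarrow>
    \<exists>y b\<^sub>1 b\<^sub>2. E y b\<^sub>1 \<and> E y b\<^sub>2 \<and> b\<^sub>1 \<noteq> b\<^sub>2 \<and> br y b\<^sub>1 \<subseteq> br r a - {r} \<and> br y b\<^sub>2 \<subseteq> br r a - {r}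
       \<and> path (br y b\<^sub>1) \<and> path (br y b\<^sub>2)"
proof (induction n arbitrary: r a)
  case 0
  obtain y b\<^sub>1 b\<^sub>2 where y: "E y b\<^sub>1" "E y b\<^sub>2" "b\<^sub>1 \<noteq> b\<^sub>2"
     "br y b\<^sub>1 \<subseteq> br r a - {r}" "br y b\<^sub>2 \<subseteq> br r a - {r}"
    using fork_in_nonpath_branch[OF 0(1,2)] by blast
  obtain x where "x \<in> R" "x \<in> br y b\<^sub>1 - {y} \<or> x \<in> br y b\<^sub>2 - {y}"
    using resolving_meets_branch[OF R y(1-3)] by blast
  then show ?case using 0(3) y(4,5) by blast
next
  case (Suc n)
  obtain y b\<^sub>1 b\<^sub>2 where y: "E y b\<^sub>1" "E y b\<^sub>2" "b\<^sub>1 \<noteq> b\<^sub>2"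
     "br y b\<^sub>1 \<subseteq> br r a - {r}" "br y b\<^sub>2 \<subseteq> br r a - {r}"
    using fork_in_nonpath_branch[OF Suc(2,3)] by blast
  have descend: "\<exists>y b\<^sub>1 b\<^sub>2. E y b\<^sub>1 \<and> E y b\<^sub>2 \<and> b\<^sub>1 \<noteq> b\<^sub>2 \<and> br y b\<^sub>1 \<subseteq> br r a - {r}
       \<and> br y b\<^sub>2 \<subseteq> br r a - {r} \<and> path (br y b\<^sub>1) \<and> path (br y b\<^sub>2)"
    if b: "E y b" "br y b \<subseteq> br r a - {r}" "\<not> path (br y b)" for b
  proof -
    have "d y x < n" if x: "x \<in> R" "x \<in> br y b - {y}" for x
    proof -
      have "r \<in> V" "r \<notin> br y b" using edgeD[OF Suc(2)] b(2) by auto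
      then have "d y x < d r x" using dist_into_branch_less[OF b(1)] x(2) by blast
      moreover have "d r x < Suc n" using Suc(4) x b(2) by blast
      ultimately show ?thesis by simp
    qed
    then show ?thesis using Suc.IH[OF b(1,3)] b(2) by blast
  qed
  show ?case
  proof (cases "path (br y b\<^sub>1) \<and> path (br y b\<^sub>2)")
    case True then show ?thesis using y by blast
  next
    case False then show ?thesis using descend y by blast
  qed
qed

lemma two_legs_in_nonpath_branch:
  assumes "resolving V E R" "finite R" and "E r a" "\<not> path (br r a)"
  shows "\<exists>y b\<^sub>1 b\<^sub>2. E y b\<^sub>1 \<and> E y b\<^sub>2 \<and> b\<^sub>1 \<noteq> b\<^sub>2 \<and> br y b\<^sub>1 \<subseteq> br r a - {r}
       \<and> br y b\<^sub>2 \<subseteq> br r a - {r} \<and> path (br y b\<^sub>1) \<and> path (br y b\<^sub>2)"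
proof -
  have "\<forall>x\<in>R. x \<in> br r a - {r} \<longrightarrow> d r x < Suc (Max (d r ` R))"
    using assms(2) by (simp add: le_imp_less_Suc)
  then show ?thesis using two_legs_in_nonpath_branch_bounded assms by blast
qed

end

section \<open>Pairs not resolved by a set\<close>

context tree_graph
begin

text \<open>If \<open>u \<noteq> w\<close> have the same distances to all vertices of \<open>S\<close>, then all of \<open>S\<close> lies in the
  branch at \<open>u\<close> towards \<open>w\<close>, so the first step \<open>p\<close> from \<open>u\<close> towards \<open>w\<close> is closer to every
  vertex of \<open>S\<close>.\<close>

lemma unresolved_step:
  assumes "S \<subseteq> V" "u \<in> V" "w \<in> V" "u \<noteq> w" "\<forall>s\<in>S. d u s = d w s"
  shows "\<exists>p. E u p \<and> w \<in> br u p \<and> d u w = Suc (d p w) \<and> (\<forall>s\<in>S. d u s = Suc (d p s))"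
proof -
  obtain p where p: "E u p" "w \<in> br u p" "d u w = Suc (d p w)"
    using branch_toward assms(2-4) by metis
  have "d u s = Suc (d p s)" if "s \<in> S" for s
    using equidistant_in_branch[OF p(1,2)] branch_dist[OF p(1)] assms that by blast
  then show ?thesis using p by blast
qed

text \<open>If the first steps from \<open>u\<close> and from \<open>w\<close> towards each other meet in a common
  neighbour \<open>p\<close>, the branches at \<open>p\<close> through \<open>u\<close> and through \<open>w\<close> avoid \<open>S\<close>: on them the
  distance to \<open>p\<close> would exceed the distance to \<open>u\<close> (resp. \<open>w\<close>).\<close>

lemma unresolved_common_neighbour:
  assumes "E p u" "E p w" "\<forall>s\<in>S. d u s = Suc (d p s)" "\<forall>s\<in>S. d u s = d w s"
  shows "S \<inter> (br p u - {p}) = {}" "S \<inter> (br p w - {p}) = {}"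
proof -
  have "S \<inter> (br p x - {p}) = {}" if x: "x = u \<or> x = w" for x
  proof (rule ccontr)
    assume "S \<inter> (br p x - {p}) \<noteq> {}"
    then obtain s where s: "s \<in> S" "s \<in> br p x" "s \<noteq> p" by blast
    have "d p s = Suc (d x s)" using branch_dist s(2,3) assms(1,2) x by blast
    then show False using assms(3,4) s(1) x by fastforce
  qed
  then show "S \<inter> (br p u - {p}) = {}" "S \<inter> (br p w - {p}) = {}" by blast+
qed

text \<open>Walking inwards from both ends of an unresolved pair we reach two adjacent vertices,
  or two vertices at distance two; in both cases some vertex \<open>m\<close> has two branches that
  avoid \<open>S\<close>.\<close>

lemma unresolved_pair_free_branches:
  assumes SV: "S \<subseteq> V" and Sne: "S \<noteq> {}"
  shows "u \<in> V \<Longrightarrow> w \<in> V \<Longrightarrow> u \<noteq> w \<Longrightarrow> \<forall>s\<in>S. d u s = d w s \<Longrightarrow>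
    \<exists>m a b. E m a \<and> E m b \<and> a \<noteq> b \<and> S \<inter> (br m a - {m}) = {} \<and> S \<inter> (br m b - {m}) = {}"
proof (induction "d u w" arbitrary: u w rule: less_induct)
  case less
  note uV = less.prems(1) and wV = less.prems(2) and uw = less.prems(3) and eq = less.prems(4)
  obtain p where p: "E u p" "w \<in> br u p" "d u w = Suc (d p w)" and sp: "\<forall>s\<in>S. d u s = Suc (d p s)"
    using unresolved_step[OF SV uV wV uw eq] by blast
  obtain q where q: "E w q" "u \<in> br w q" "d w u = Suc (d q u)" and sq: "\<forall>s\<in>S. d w s = Suc (d q s)"
    using unresolved_step[OF SV wV uV uw[symmetric]] eq by fastforce
  have pV: "p \<in> V" and qV: "q \<in> V" using edgeD p(1) q(1) by blast+
  have dwu: "d w u = d u w" using dist_sym uV wV by simp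
  consider "d p w = 0" | "d p w = 1" | "2 \<le> d p w" by linarith
  then show ?case
  proof cases
    case 1
    then have "p = w" using dist_eq_0 pV wV by blast
    obtain s where "s \<in> S" using Sne by blast
    then show ?thesis using sp eq \<open>p = w\<close> by fastforce
  next
    case 2
    then have Epw: "E p w" and Epu: "E p u" using dist_eq_1 pV wV edgeD[OF p(1)] by blast+
    then show ?thesis using unresolved_common_neighbour[OF Epu Epw sp eq] uw by blast
  next
    case 3
    have "q \<noteq> u" using dist_edge[of w q] q(1) dwu p(3) 3 by auto
    have "p \<noteq> q" using dist_edge[OF p(1)] dist_sym uV pV q(3) dwu p(3) 3 by auto
    have "d u q = Suc (d p q)"
      using branch_dist[OF p(1) branch_closed[OF p(1,2) uw[symmetric] q(1) \<open>q \<noteq> u\<close>] \<open>q \<noteq> u\<close>] .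
    then have "d p q < d u w" using dist_sym[OF uV qV] q(3) dwu by simp
    moreover have "\<forall>s\<in>S. d p s = d q s" using sp sq eq by fastforce
    ultimately show ?thesis using less.hyps pV qV \<open>p \<noteq> q\<close> by blast
  qed
qed

end

section \<open>Legs in a locally finite tree\<close>

text \<open>A leg at \<open>v\<close> is a branch path at \<open>v\<close>.  \<open>legs v\<close> collects the vertices \<open>\<noteq> v\<close> on legs at
  \<open>v\<close>; the legs at different vertices of degree at least three are disjoint, which makes the
  counting in the lower bound additive over the vertices.\<close>

locale locally_finite_tree = tree_graph +
  assumes locally_finite: "locally_finite V E"
begin

abbreviation bp where "bp \<equiv> branch_paths V E"
abbreviation PT where "PT \<equiv> P_T V E"

lemma nbrs_finite: "finite {w. E v w}"
proof (cases "v \<in> V")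
  case True then show ?thesis using locally_finite unfolding locally_finite_def by blast
next
  case False then have "{w. E v w} = {}" using edgeD by blast
  then show ?thesis by simp
qed

lemma branches_eq: "branches V E v = br v ` {w. E v w}"
  unfolding branches_def by auto

lemma branches_finite: "finite (branches V E v)"
  unfolding branches_eq using nbrs_finite by simp

lemma card_branches: "card (branches V E v) = deg E v"
proof -
  have "inj_on (br v) {w. E v w}" by (rule inj_onI) (use branch_inj in auto)
  then show ?thesis unfolding branches_eq deg_def by (simp add: card_image)
qed

lemma branch_paths_subset: "bp v \<subseteq> branches V E v"
  unfolding branch_paths_def by auto

lemma branch_paths_finite: "finite (bp v)"
  using finite_subset[OF branch_paths_subset branches_finite] .

lemma branch_paths_iff: "B \<in> bp v \<longleftrightarrow> (\<exists>a. E v a \<and> B = br v a) \<and> path B"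
  unfolding branch_paths_def branches_def by auto

lemma two_branch_paths_imp_PT:
  assumes "E v a" "E v b" "a \<noteq> b" "path (br v a)" "path (br v b)"
  shows "2 \<le> PT v"
proof -
  have "{br v a, br v b} \<subseteq> bp v" using assms branch_paths_iff by blast
  then have "card {br v a, br v b} \<le> PT v"
    unfolding P_T_def using branch_paths_finite card_mono by blast
  moreover have "br v a \<noteq> br v b" using branch_inj assms(1-3) by blast
  ultimately show ?thesis by simp
qed

lemma deg_in_leg:
  assumes "E v a" "path (br v a)" "x \<in> br v a" "x \<noteq> v"
  shows "deg E x \<le> 2"
proof -
  have "{w. E x w} \<subseteq> br v a" using branch_closed[OF assms(1,3,4)] root_in_branch by blast
  then show ?thesis unfolding deg_def using path_or_ray_deg_le_2[OF assms(2,3)] by blast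
qed

text \<open>A vertex with two legs has degree at least three, unless the whole tree has maximum
  degree two: if all branches at a vertex of degree at most two are paths, so is the tree.\<close>

lemma two_legs_imp_major:
  assumes "2 \<le> PT v" and major: "\<exists>u\<in>V. 3 \<le> deg E u"
  shows "v \<in> V" "3 \<le> deg E v"
proof -
  have "bp v \<noteq> {}" using assms(1) unfolding P_T_def by auto
  then obtain a where "E v a" using branch_paths_iff by blast
  then show vV: "v \<in> V" using edgeD by blast
  show "3 \<le> deg E v"
  proof (rule ccontr)
    assume "\<not> 3 \<le> deg E v"
    then have "card (branches V E v) \<le> card (bp v)" using assms(1) card_branches unfolding P_T_def
      by simp
    moreover have "card (bp v) \<le> card (branches V E v)"
      using card_mono[OF branches_finite branch_paths_subset] .
    ultimately have "bp v = branches V E v"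
      using card_subset_eq[OF branches_finite branch_paths_subset] by simp
    then have all_legs: "path (br v w)" if "E v w" for w
      using that branch_paths_iff[of "br v w" v] unfolding branches_eq by blast
    have "deg E u \<le> 2" if uV: "u \<in> V" for u
    proof (cases "u = v")
      case True then show ?thesis using \<open>\<not> 3 \<le> deg E v\<close> by simp
    next
      case False
      then obtain p where "E v p" "u \<in> br v p" using branch_toward[OF vV uV] by blast
      then show ?thesis using deg_in_leg all_legs False by blast
    qed
    then show False using major by fastforce
  qed
qed

definition legs :: "'a \<Rightarrow> 'a set" where
  "legs v = (\<Union>B\<in>bp v. B - {v})"

lemma legs_iff: "x \<in> legs v \<longleftrightarrow> (\<exists>a. E v a \<and> path (br v a) \<and> x \<in> br v a \<and> x \<noteq> v)"
  unfolding legs_def using branch_paths_iff by auto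

lemma legs_subset_V: "legs v \<subseteq> V"
  unfolding legs_def using branch_paths_iff branch_subset_V by blast

lemma legs_disjoint:
  assumes "3 \<le> deg E v" "3 \<le> deg E v'" "v \<noteq> v'"
  shows "legs v \<inter> legs v' = {}"
proof (rule ccontr)
  assume "legs v \<inter> legs v' \<noteq> {}"
  then obtain x where "x \<in> legs v" "x \<in> legs v'" by blast
  then obtain a a' where a: "E v a" "path (br v a)" "x \<in> br v a" "x \<noteq> v"
    and a': "E v' a'" "path (br v' a')" "x \<in> br v' a'" "x \<noteq> v'"
    unfolding legs_iff by metis
  have V: "v \<in> V" "v' \<in> V" "x \<in> V" using edgeD a a' branch_subset_V by blast+
  have "v' \<notin> br v a - {v}" using deg_in_leg[OF a(1,2)] assms(2) by fastforce
  then have 1: "d x v' = d x v + d v v'" using branch_cut[OF a(1,3,4) V(2)] by blast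
  have "v \<notin> br v' a' - {v'}" using deg_in_leg[OF a'(1,2)] assms(1) by fastforce
  then have 2: "d x v = d x v' + d v' v" using branch_cut[OF a'(1,3,4) V(1)] by blast
  have "d v v' = 0" using 1 2 dist_sym V by simp
  then show False using dist_eq_0 V assms(3) by blast
qed

definition leg_of :: "'a \<Rightarrow> 'a \<Rightarrow> 'a set" where
  "leg_of v x = (SOME B. B \<in> bp v \<and> x \<in> B - {v})"

lemma leg_of: "x \<in> legs v \<Longrightarrow> leg_of v x \<in> bp v \<and> x \<in> leg_of v x - {v}"
  unfolding leg_of_def legs_def by (rule someI_ex) blast

lemma leg_unique:
  assumes "B \<in> bp v" "B' \<in> bp v" "x \<in> B - {v}" "x \<in> B' - {v}"
  shows "B = B'"
proof -
  obtain a a' where "E v a" "B = br v a" "E v a'" "B' = br v a'"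
    using assms(1,2) branch_paths_iff by metis
  then show ?thesis using branch_unique assms(3,4) by blast
qed

lemma resolving_meets_legs:
  assumes "resolving V E R" "finite R"
  shows "PT v - 1 \<le> card (leg_of v ` (R \<inter> legs v))"
proof -
  define hit where "hit = {B \<in> bp v. R \<inter> (B - {v}) \<noteq> {}}"
  have "hit \<subseteq> leg_of v ` (R \<inter> legs v)"
  proof
    fix B assume "B \<in> hit"
    then obtain x where x: "B \<in> bp v" "x \<in> R" "x \<in> B - {v}" unfolding hit_def by blast
    then have xl: "x \<in> legs v" unfolding legs_def by blast
    then have "leg_of v x = B" using leg_of leg_unique x by blast
    then show "B \<in> leg_of v ` (R \<inter> legs v)" using xl x(2) by blast
  qed
  then have "card hit \<le> card (leg_of v ` (R \<inter> legs v))" using assms(2) by (intro card_mono) auto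
  moreover have "card (bp v - hit) \<le> Suc 0"
  proof (subst card_le_Suc0_iff_eq)
    show "finite (bp v - hit)" using branch_paths_finite by simp
    show "\<forall>B\<^sub>1\<in>bp v - hit. \<forall>B\<^sub>2\<in>bp v - hit. B\<^sub>1 = B\<^sub>2"
    proof (intro ballI, rule ccontr)
      fix B\<^sub>1 B\<^sub>2 assume B: "B\<^sub>1 \<in> bp v - hit" "B\<^sub>2 \<in> bp v - hit" "B\<^sub>1 \<noteq> B\<^sub>2"
      then obtain a\<^sub>1 a\<^sub>2 where a: "E v a\<^sub>1" "E v a\<^sub>2" "a\<^sub>1 \<noteq> a\<^sub>2" "B\<^sub>1 = br v a\<^sub>1" "B\<^sub>2 = br v a\<^sub>2"
        using B branch_paths_iff by (metis DiffD1)
      then show False using resolving_meets_branch[OF assms(1) a(1-3)] B unfolding hit_def by blast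
    qed
  qed
  moreover have "card (bp v) = card hit + card (bp v - hit)"
    using card_Diff_subset[of hit "bp v"] branch_paths_finite card_mono[of "bp v" hit]
    unfolding hit_def by fastforce
  ultimately show ?thesis unfolding P_T_def by simp
qed

end

section \<open>Metric bases of trees of finite metric dimension\<close>

locale tree_finite_dim = locally_finite_tree +
  assumes major_exists: "\<exists>u\<in>V. 3 \<le> deg E u"
    and finite_resolving: "\<exists>R. finite R \<and> resolving V E R"
begin

definition legged :: "'a set" where
  "legged = {v \<in> V. 2 \<le> PT v}"

lemma legged_major: "v \<in> legged \<Longrightarrow> 3 \<le> deg E v"
  using two_legs_imp_major(2) major_exists unfolding legged_def by blast

lemma legged_legs_disjoint: "v \<in> legged \<Longrightarrow> v' \<in> legged \<Longrightarrow> v \<noteq> v' \<Longrightarrow> legs v \<inter> legs v' = {}"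
  by (rule legs_disjoint) (auto intro: legged_major)

lemma resolving_card_legs:
  assumes "resolving V E R" "finite R"
  shows "PT v - 1 \<le> card (R \<inter> legs v)"
  using resolving_meets_legs[OF assms] card_image_le[of "R \<inter> legs v" "leg_of v"] assms(2)
  by (meson finite_Int order_trans)

text \<open>A finite resolving set meets the legs of every vertex of \<open>legged\<close>, and these sets of legs
  are disjoint; hence \<open>legged\<close> is finite.\<close>

lemma legged_finite: "finite legged"
proof -
  obtain R where R: "finite R" "resolving V E R" using finite_resolving by blast
  have "\<forall>v\<in>legged. \<exists>x. x \<in> R \<inter> legs v"
  proof
    fix v assume "v \<in> legged"
    then have "0 < card (R \<inter> legs v)"
      using resolving_card_legs[OF R(2,1), of v] unfolding legged_def by auto
    then show "\<exists>x. x \<in> R \<inter> legs v" by (metis card.empty ex_in_conv less_irrefl)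
  qed
  from bchoice[OF this] obtain h where h: "\<forall>v\<in>legged. h v \<in> R \<inter> legs v" by blast
  have "inj_on h legged"
  proof (rule inj_onI)
    fix v v' assume v: "v \<in> legged" "v' \<in> legged" "h v = h v'"
    then have "h v \<in> legs v \<inter> legs v'" using h by auto
    then show "v = v'" using legged_legs_disjoint[OF v(1,2)] by blast
  qed
  moreover have "h ` legged \<subseteq> R" using h by blast
  ultimately show ?thesis using inj_on_finite R(1) by blast
qed

definition leg_sum :: nat where
  "leg_sum = (\<Sum>v\<in>legged. PT v - 1)"

lemma leg_sum_le_resolving:
  assumes "resolving V E R" "finite R"
  shows "leg_sum \<le> card R"
proof -
  have "leg_sum \<le> (\<Sum>v\<in>legged. card (R \<inter> legs v))"
    unfolding leg_sum_def by (rule sum_mono) (rule resolving_card_legs[OF assms])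
  also have "\<dots> = card (\<Union>v\<in>legged. R \<inter> legs v)"
    by (rule card_UN_disjoint[symmetric]) (use legged_finite assms(2) legged_legs_disjoint in auto)
  also have "\<dots> \<le> card R" by (rule card_mono[OF assms(2)]) auto
  finally show ?thesis .
qed

text \<open>The sets described in the theorem: for each \<open>v \<in> legged\<close>, \<open>PT v - 1\<close> vertices other
  than \<open>v\<close> on pairwise distinct legs at \<open>v\<close>.\<close>

definition leg_choice :: "('a \<Rightarrow> 'a set) \<Rightarrow> bool" where
  "leg_choice c \<longleftrightarrow> (\<forall>v\<in>legged. finite (c v) \<and> card (c v) = PT v - 1 \<and> v \<notin> c v \<and>
      (\<exists>g. inj_on g (c v) \<and> (\<forall>x\<in>c v. g x \<in> bp v \<and> x \<in> g x)))"

lemma leg_choice_legs: "leg_choice c \<Longrightarrow> v \<in> legged \<Longrightarrow> c v \<subseteq> legs v"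
  unfolding leg_choice_def legs_def by blast

text \<open>Missing only one leg, a choice meets one of any two legs at \<open>v\<close>.\<close>

lemma leg_choice_meets:
  assumes c: "leg_choice c" and v: "v \<in> legged" and B: "B\<^sub>1 \<in> bp v" "B\<^sub>2 \<in> bp v" "B\<^sub>1 \<noteq> B\<^sub>2"
  shows "\<exists>x\<in>c v. x \<in> B\<^sub>1 - {v} \<or> x \<in> B\<^sub>2 - {v}"
proof (rule ccontr)
  assume missed: "\<not> ?thesis"
  obtain g where g: "inj_on g (c v)" "\<forall>x\<in>c v. g x \<in> bp v \<and> x \<in> g x"
    and cv: "card (c v) = PT v - 1" "v \<notin> c v"
    using c v unfolding leg_choice_def by blast
  have "g ` c v \<subseteq> bp v - {B\<^sub>1, B\<^sub>2}" using g cv(2) missed by fastforce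
  then have "card (g ` c v) \<le> card (bp v - {B\<^sub>1, B\<^sub>2})"
    using branch_paths_finite by (intro card_mono) auto
  also have "\<dots> = PT v - 2" unfolding P_T_def using B branch_paths_finite by (simp add: card_Diff_subset)
  finally have "PT v - 1 \<le> PT v - 2" using card_image[OF g(1)] cv(1) by simp
  moreover have "2 \<le> PT v" using v unfolding legged_def by simp
  ultimately show False by simp
qed

text \<open>A branch avoided by a choice is a path: otherwise it would contain a vertex with two
  legs, one of which the choice meets.\<close>

lemma leg_choice_avoided_branch:
  assumes c: "leg_choice c" and ra: "E r a" and avoid: "(\<Union>v\<in>legged. c v) \<inter> (br r a - {r}) = {}"
  shows "path (br r a)"
proof (rule ccontr)
  assume np: "\<not> path (br r a)"
  obtain R where R: "finite R" "resolving V E R" using finite_resolving by blast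
  obtain y b\<^sub>1 b\<^sub>2 where y: "E y b\<^sub>1" "E y b\<^sub>2" "b\<^sub>1 \<noteq> b\<^sub>2"
    "br y b\<^sub>1 \<subseteq> br r a - {r}" "br y b\<^sub>2 \<subseteq> br r a - {r}" "path (br y b\<^sub>1)" "path (br y b\<^sub>2)"
    using two_legs_in_nonpath_branch[OF R(2,1) ra np] by blast
  have y_legged: "y \<in> legged"
    using two_branch_paths_imp_PT[OF y(1-3,6,7)] edgeD[OF y(1)] unfolding legged_def by blast
  have "br y b\<^sub>1 \<in> bp y" "br y b\<^sub>2 \<in> bp y"
    using y(1,2,6,7) branch_paths_iff by blast+
  moreover have "br y b\<^sub>1 \<noteq> br y b\<^sub>2" using branch_inj y(1-3) by blast
  ultimately obtain x where "x \<in> c y" "x \<in> br y b\<^sub>1 - {y} \<or> x \<in> br y b\<^sub>2 - {y}"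
    using leg_choice_meets[OF c y_legged] by blast
  then show False using avoid y(4,5) y_legged by blast
qed

lemma legged_nonempty: "legged \<noteq> {}"
proof -
  obtain u where u: "u \<in> V" "3 \<le> deg E u" using major_exists by blast
  show ?thesis
  proof (cases "\<forall>w. E u w \<longrightarrow> path (br u w)")
    case True
    then have "bp u = branches V E u" unfolding branches_eq using branch_paths_iff by blast
    then have "PT u = deg E u" unfolding P_T_def using card_branches by simp
    then show ?thesis using u unfolding legged_def by auto
  next
    case False
    then obtain w where "E u w" "\<not> path (br u w)" by blast
    moreover obtain R where "finite R" "resolving V E R" using finite_resolving by blast
    ultimately obtain y b\<^sub>1 b\<^sub>2 where "E y b\<^sub>1" "E y b\<^sub>2" "b\<^sub>1 \<noteq> b\<^sub>2" "path (br y b\<^sub>1)" "path (br y b\<^sub>2)"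
      using two_legs_in_nonpath_branch by metis
    then show ?thesis
      using two_branch_paths_imp_PT edgeD unfolding legged_def by blast
  qed
qed

text \<open>Sufficiency: a pair not resolved by a choice would give a vertex with two branches
  avoiding it; both are legs, contradicting \<open>leg_choice_meets\<close>.\<close>

lemma leg_choice_resolving:
  assumes c: "leg_choice c"
  shows "resolving V E (\<Union>v\<in>legged. c v)"
proof -
  define S where "S = (\<Union>v\<in>legged. c v)"
  have SV: "S \<subseteq> V" unfolding S_def using leg_choice_legs[OF c] legs_subset_V by blast
  have "S \<noteq> {}"
  proof -
    obtain v where v: "v \<in> legged" using legged_nonempty by blast
    then have "c v \<noteq> {}" using c unfolding leg_choice_def legged_def by auto
    then show ?thesis unfolding S_def using v by blast
  qed
  have "\<exists>x\<in>S. d u x \<noteq> d w x" if uw: "u \<in> V" "w \<in> V" "u \<noteq> w" for u w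
  proof (rule ccontr)
    assume "\<not> ?thesis"
    then obtain m a b where m: "E m a" "E m b" "a \<noteq> b"
      "S \<inter> (br m a - {m}) = {}" "S \<inter> (br m b - {m}) = {}"
      using unresolved_pair_free_branches[OF SV \<open>S \<noteq> {}\<close> uw] by blast
    have legs: "path (br m a)" "path (br m b)"
      using leg_choice_avoided_branch[OF c] m unfolding S_def by blast+
    have m_legged: "m \<in> legged"
      using two_branch_paths_imp_PT[OF m(1-3) legs] edgeD[OF m(1)] unfolding legged_def by blast
    have "br m a \<in> bp m" "br m b \<in> bp m" "br m a \<noteq> br m b"
      using legs m branch_paths_iff branch_inj by blast+
    then obtain x where "x \<in> c m" "x \<in> br m a - {m} \<or> x \<in> br m b - {m}"
      using leg_choice_meets[OF c m_legged] by blast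
    then show False using m(4,5) m_legged unfolding S_def by blast
  qed
  then show ?thesis unfolding resolving_def S_def[symmetric] using SV by blast
qed

lemma leg_choice_card:
  assumes c: "leg_choice c"
  shows "finite (\<Union>v\<in>legged. c v)" "card (\<Union>v\<in>legged. c v) = leg_sum"
proof -
  have fin: "\<forall>v\<in>legged. finite (c v)" using c unfolding leg_choice_def by blast
  then show "finite (\<Union>v\<in>legged. c v)" using legged_finite by blast
  have "\<forall>v\<in>legged. \<forall>v'\<in>legged. v \<noteq> v' \<longrightarrow> c v \<inter> c v' = {}"
    using legged_legs_disjoint leg_choice_legs[OF c] by blast
  then have "card (\<Union>v\<in>legged. c v) = (\<Sum>v\<in>legged. card (c v))"
    using card_UN_disjoint[OF legged_finite fin] by blast
  also have "\<dots> = leg_sum" unfolding leg_sum_def using c unfolding leg_choice_def by simp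
  finally show "card (\<Union>v\<in>legged. c v) = leg_sum" .
qed

text \<open>A choice exists: take the neighbours of \<open>v\<close> on all legs at \<open>v\<close> but one.\<close>

lemma leg_choice_exists: "\<exists>c. leg_choice c"
proof -
  have "\<exists>C. finite C \<and> card C = PT v - 1 \<and> v \<notin> C \<and>
      (\<exists>g. inj_on g C \<and> (\<forall>x\<in>C. g x \<in> bp v \<and> x \<in> g x))" (is "\<exists>C. ?P v C") for v
  proof -
    define N where "N = {a. E v a \<and> path (br v a)}"
    have "bp v = br v ` N"
    proof
      show "bp v \<subseteq> br v ` N" unfolding N_def by (auto simp: branch_paths_iff)
      show "br v ` N \<subseteq> bp v" unfolding N_def by (auto simp: branch_paths_iff)
    qed
    moreover have inj: "inj_on (br v) N" unfolding N_def by (rule inj_onI) (use branch_inj in blast)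
    ultimately have "card N = PT v" unfolding P_T_def by (simp add: card_image)
    then have "PT v - 1 \<le> card N" by simp
    then obtain C where C: "C \<subseteq> N" "card C = PT v - 1" "finite C"
      by (rule obtain_subset_with_card_n)
    have "v \<notin> C" using C(1) edgeD unfolding N_def by blast
    moreover have "inj_on (br v) C" using C(1) inj inj_on_subset by blast
    moreover have "\<forall>x\<in>C. br v x \<in> bp v \<and> x \<in> br v x"
      using C(1) branch_paths_iff nbr_in_branch unfolding N_def by blast
    ultimately show ?thesis using C(2,3) by blast
  qed
  then have "\<forall>v. \<exists>C. ?P v C" by blast
  from choice[OF this] obtain c where "\<forall>v. ?P v (c v)" by blast
  then show ?thesis unfolding leg_choice_def by blast
qed

lemma metric_dim_eq: "metric_dim V E = enat leg_sum"
proof -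
  obtain c where c: "leg_choice c" using leg_choice_exists by blast
  have "(LEAST n. \<exists>S. finite S \<and> resolving V E S \<and> card S = n) = leg_sum"
  proof (rule Least_equality)
    show "\<exists>S. finite S \<and> resolving V E S \<and> card S = leg_sum"
      using leg_choice_card[OF c] leg_choice_resolving[OF c] by blast
  qed (use leg_sum_le_resolving in blast)
  then show ?thesis unfolding metric_dim_def using finite_resolving by simp
qed

text \<open>Necessity: a resolving set of size \<open>leg_sum\<close> meets the legs of each \<open>v \<in> legged\<close> in
  exactly \<open>PT v - 1\<close> vertices on distinct legs, and has no other vertices.\<close>

lemma basis_is_leg_choice:
  assumes S: "finite S" "resolving V E S" "card S = leg_sum"
  shows "\<exists>c. leg_choice c \<and> S = (\<Union>v\<in>legged. c v)"
proof -
  define c where "c v = S \<inter> legs v" for v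
  have le: "leg_sum \<le> (\<Sum>v\<in>legged. card (c v))"
    unfolding leg_sum_def c_def by (rule sum_mono) (rule resolving_card_legs[OF S(2,1)])
  have union: "(\<Sum>v\<in>legged. card (c v)) = card (\<Union>v\<in>legged. c v)" unfolding c_def
    by (rule card_UN_disjoint[symmetric]) (use legged_finite S(1) legged_legs_disjoint in auto)
  have sub: "(\<Union>v\<in>legged. c v) \<subseteq> S" unfolding c_def by auto
  have le_S: "card (\<Union>v\<in>legged. c v) \<le> card S" by (rule card_mono[OF S(1) sub])
  then have sum_eq: "(\<Sum>v\<in>legged. PT v - 1) = (\<Sum>v\<in>legged. card (c v))"
    using le union S(3) unfolding leg_sum_def by linarith
  have cv: "card (c v) = PT v - 1" if v: "v \<in> legged" for v
  proof -
    have "PT v - 1 = card (c v)"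
      by (rule sum_mono_inv[OF sum_eq _ v legged_finite])
        (use resolving_card_legs[OF S(2,1)] in \<open>simp add: c_def\<close>)
    then show ?thesis by simp
  qed
  have "(\<Union>v\<in>legged. c v) = S" using card_subset_eq[OF S(1) sub] le le_S union S(3) by linarith
  moreover have "leg_choice c" unfolding leg_choice_def
  proof (intro ballI conjI)
    fix v assume v: "v \<in> legged"
    show "finite (c v)" using S(1) unfolding c_def by simp
    show "card (c v) = PT v - 1" using cv[OF v] .
    show "v \<notin> c v" unfolding c_def legs_def by blast
    have "card (leg_of v ` c v) \<le> card (c v)" using card_image_le S(1) unfolding c_def by blast
    then have "card (leg_of v ` c v) = card (c v)"
      using resolving_meets_legs[OF S(2,1), of v] cv[OF v] unfolding c_def by simp
    then have "inj_on (leg_of v) (c v)" using S(1) unfolding c_def by (intro eq_card_imp_inj_on) auto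
    moreover have "\<forall>x\<in>c v. leg_of v x \<in> bp v \<and> x \<in> leg_of v x" using leg_of unfolding c_def by blast
    ultimately show "\<exists>g. inj_on g (c v) \<and> (\<forall>x\<in>c v. g x \<in> bp v \<and> x \<in> g x)" by blast
  qed
  ultimately show ?thesis by blast
qed

lemma metric_basis_iff: "metric_basis V E S \<longleftrightarrow> (\<exists>c. leg_choice c \<and> S = (\<Union>v\<in>legged. c v))"
  using basis_is_leg_choice leg_choice_card leg_choice_resolving
  unfolding metric_basis_def metric_dim_eq by auto

lemma Sum_any_eq_leg_sum:
  "Sum_any (\<lambda>v. if v \<in> V \<and> 3 \<le> deg E v then max (PT v - 1) 0 else 0) = leg_sum"
proof -
  let ?f = "\<lambda>v. if v \<in> V \<and> 3 \<le> deg E v then max (PT v - 1) 0 else 0"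
  have "{v. ?f v \<noteq> 0} \<subseteq> legged" unfolding legged_def by auto
  then have "Sum_any ?f = sum ?f legged" by (rule Sum_any.expand_superset[OF legged_finite])
  also have "\<dots> = leg_sum" unfolding leg_sum_def
    by (rule sum.cong) (use legged_major in \<open>auto simp: legged_def\<close>)
  finally show ?thesis .
qed

end

theorem theorem4:
  fixes V :: "'a set" and E :: "'a \<Rightarrow> 'a \<Rightarrow> bool"
  assumes "tree V E"
    and "infinite V"
    and "locally_finite V E"
    and "\<exists>v\<in>V. 3 \<le> deg E v"
    and "metric_dim V E \<noteq> \<infinity>"
  shows "metric_dim V E =
           enat (Sum_any (\<lambda>v. if v \<in> V \<and> 3 \<le> deg E v then max (P_T V E v - 1) 0 else 0))
       \<and> (\<forall>S. metric_basis V E S \<longleftrightarrow>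
            (\<exists>c :: 'a \<Rightarrow> 'a set.
               (\<forall>v\<in>V. 2 \<le> P_T V E v \<longrightarrow>
                  finite (c v) \<and> card (c v) = P_T V E v - 1 \<and> v \<notin> c v \<and>
                  (\<exists>g. inj_on g (c v) \<and> (\<forall>x\<in>c v. g x \<in> branch_paths V E v \<and> x \<in> g x)))
             \<and> S = (\<Union>v\<in>{v\<in>V. 2 \<le> P_T V E v}. c v)))"
proof -
  have "\<exists>R. finite R \<and> resolving V E R"
    using assms(5) unfolding metric_dim_def by (auto split: if_splits)
  then interpret tree_finite_dim V E
    using assms(1,3,4) by unfold_locales
  have legged: "{v\<in>V. 2 \<le> P_T V E v} = legged"
    unfolding legged_def ..
  have choice: "(\<forall>v\<in>V. 2 \<le> P_T V E v \<longrightarrow>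
                  finite (c v) \<and> card (c v) = P_T V E v - 1 \<and> v \<notin> c v \<and>
                  (\<exists>g. inj_on g (c v) \<and> (\<forall>x\<in>c v. g x \<in> branch_paths V E v \<and> x \<in> g x)))
           \<longleftrightarrow> leg_choice c" for c
    unfolding leg_choice_def legged_def by blast
  show ?thesis
    unfolding legged choice metric_basis_iff Sum_any_eq_leg_sum metric_dim_eq by blast
qed

end
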